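(* Let $q$ be a prime power, $l\ge1$, $t=q^l$, $G_4(x)=x^t+x^{t-1}+1$, $G_5(x)=x^{t+1}+x^t+x$, and $L_4^*=\{\alpha\in GF(t^2):\ \alpha\neq0,\ G_4(\alpha)\ne0\}$. Then the $q$-ary Goppa codes $\Gamma_5^{(q-1)}=\Gamma(L_4^*,G_5^{q-1})$ and $\Gamma_4^{*(q-1)}=\Gamma(L_4^*,G_4^{q-1})$ have equal parity-check matrices, i.e., they coincide as codes.
   Context: For a set $L=\{\alpha_1,\dots,\alpha_n\}$ of distinct elements of $GF(t^2)$ and $P\in GF(t^2)[x]$ with $P(\alpha_k)\neq0$ for all $k$, the $q$-ary Goppa code is $\Gamma(L,P)=\{c\in GF(q)^n:\ \sum_k c_k\alpha_k^s/P(\alpha_k)=0 \text{ for } s=0,\dots,\deg P-1\}$. *)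

theory Defs
  imports "HOL-Computational_Algebra.Computational_Algebra" "HOL-Library.Cardinality"
begin

definition subfield_GF :: "nat \<Rightarrow> 'a::field set" where
  "subfield_GF q = {x. x ^ q = x}"

definition goppa_code :: "nat \<Rightarrow> 'a::field list \<Rightarrow> 'a poly \<Rightarrow> 'a list set" where
  "goppa_code q L P = {c. length c = length L \<and> set c \<subseteq> subfield_GF q \<and>
     (\<forall>s < degree P. (\<Sum>k < length L. c ! k * (L ! k) ^ s / poly P (L ! k)) = 0)}"

definition G4 :: "nat \<Rightarrow> 'a::field poly" where
  "G4 t = monom 1 t + monom 1 (t - 1) + 1"

definition G5 :: "nat \<Rightarrow> 'a::field poly" where
  "G5 t = monom 1 (t + 1) + monom 1 t + monom 1 1"

definition L4star :: "nat \<Rightarrow> 'a::field set" where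
  "L4star t = {\<alpha>. \<alpha> \<noteq> 0 \<and> poly (G4 t) \<alpha> \<noteq> 0}"

end

theory Submission
  imports Defs "HOL-Number_Theory.Residues"
begin

(*
  On L both x and g(x) = x^t + x^(t-1) + 1 are nonzero and G5 = X g, so a G5-check with
  exponent s >= q-1 is a G4-check after cancelling x^(q-1); it remains to derive the G5-checks
  with s < q-1 from the G4-checks.  Since the symbols lie in GF(q), the q-th and t-th powers
  of a syndrome are the syndromes of the powered terms, and x^(t^2) = x gives
  g(x)^t = g(x) / x^(t-1).  Hence x^s/(x g)^(q-1) is the t-th power of a G4-term for
  0 < s < q-1, while 1/(x g)^(q-1) splits into terms x^e/g^q (e < t) plus the t-th power of
  such a term.  Finally g divides X^(t^2) - X, so X^e = K g + P^q with deg K < t(q-1) and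
  deg P < t, which writes x^e/g^q as a G4-combination plus the q-th power of one.
*)

lemma nonzero_power_card_minus_one:
  fixes x :: "'a::{finite,field}"
  assumes "x \<noteq> 0"
  shows "x ^ (CARD('a) - 1) = 1"
proof -
  define U where "U = UNIV - {0::'a}"
  have "x ^ card U * (\<Prod>y\<in>U. y) = (\<Prod>y\<in>U. x * y)"
    by (simp add: prod.distrib)
  also have "\<dots> = (\<Prod>y\<in>U. y)"
    by (rule prod.reindex_bij_witness[of _ "\<lambda>y. y / x" "\<lambda>y. x * y"])
       (use assms in \<open>auto simp: U_def\<close>)
  finally have "x ^ card U = 1"
    by (simp add: U_def)
  thus ?thesis
    by (simp add: U_def card_Diff_singleton)
qed

lemma power_card_eq_self:
  fixes x :: "'a::{finite,field}"
  shows "x ^ CARD('a) = x"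
proof (cases "x = 0")
  case False
  have "x ^ CARD('a) = x * x ^ (CARD('a) - 1)"
    using finite_UNIV_card_ge_0[where 'a='a] by (simp flip: power_Suc)
  also have "\<dots> = x"
    using nonzero_power_card_minus_one[OF False] by simp
  finally show ?thesis .
qed simp

lemma CHAR_eq_prime_of_CARD_eq_power:
  assumes "prime p" and "CARD('a::{finite,field}) = p ^ m"
  shows "CHAR('a) = p"
proof -
  have "prime CHAR('a)"
    by (intro prime_CHAR_semidom finite_imp_CHAR_pos) simp
  moreover have "CHAR('a) dvd p ^ m"
    using CHAR_dvd_CARD[where 'a='a] assms(2) by simp
  ultimately show ?thesis
    using assms(1) prime_dvd_power primes_dvd_imp_eq by blast
qed

lemma subfield_GF_subset_power: "subfield_GF q \<subseteq> subfield_GF (q ^ l)"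
proof
  fix x :: 'a assume "x \<in> subfield_GF q"
  hence "x ^ q = x" by (simp add: subfield_GF_def)
  hence "x ^ (q ^ l) = x"
    by (induction l) (simp_all add: power_mult mult.commute)
  thus "x \<in> subfield_GF (q ^ l)" by (simp add: subfield_GF_def)
qed

definition syndrome :: "'a::field list \<Rightarrow> 'a list \<Rightarrow> ('a \<Rightarrow> 'a) \<Rightarrow> 'a" where
  "syndrome c L \<phi> = (\<Sum>k<length L. c ! k * \<phi> (L ! k))"

definition goppa_checks :: "'a::field list \<Rightarrow> 'a list \<Rightarrow> 'a poly \<Rightarrow> bool" where
  "goppa_checks c L P \<longleftrightarrow> (\<forall>s<degree P. syndrome c L (\<lambda>x. x ^ s / poly P x) = 0)"

lemma goppa_code_iff_checks:
  "c \<in> goppa_code q L P \<longleftrightarrow>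
     length c = length L \<and> set c \<subseteq> subfield_GF q \<and> goppa_checks c L P"
  by (simp add: goppa_code_def goppa_checks_def syndrome_def times_divide_eq_right)

lemma syndrome_add: "syndrome c L (\<lambda>x. \<phi> x + \<psi> x) = syndrome c L \<phi> + syndrome c L \<psi>"
  by (simp add: syndrome_def distrib_left sum.distrib)

lemma syndrome_cong: "(\<And>x. x \<in> set L \<Longrightarrow> \<phi> x = \<psi> x) \<Longrightarrow> syndrome c L \<phi> = syndrome c L \<psi>"
  unfolding syndrome_def by (intro sum.cong) auto

lemma syndrome_power_CHAR_power:
  fixes c L :: "'a::field list"
  assumes "prime CHAR('a)" and "Q = CHAR('a) ^ m"
    and "length c = length L" and "set c \<subseteq> subfield_GF Q"
  shows "syndrome c L \<phi> ^ Q = syndrome c L (\<lambda>x. \<phi> x ^ Q)"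
proof -
  have "syndrome c L \<phi> ^ Q = (\<Sum>k<length L. (c ! k * \<phi> (L ! k)) ^ Q)"
    unfolding syndrome_def using assms(1,2) by (rule freshmans_dream_sum')
  also have "\<dots> = syndrome c L (\<lambda>x. \<phi> x ^ Q)"
    unfolding syndrome_def
  proof (intro sum.cong refl)
    fix k assume "k \<in> {..<length L}"
    hence "c ! k \<in> subfield_GF Q"
      using assms(3,4) nth_mem by fastforce
    thus "(c ! k * \<phi> (L ! k)) ^ Q = c ! k * \<phi> (L ! k) ^ Q"
      by (simp add: power_mult_distrib subfield_GF_def)
  qed
  finally show ?thesis .
qed

lemma syndrome_poly_eq_0:
  assumes "\<And>s. s < D \<Longrightarrow> syndrome c L (\<lambda>x. x ^ s / d x) = 0" and "degree H < D"
  shows "syndrome c L (\<lambda>x. poly H x / d x) = 0"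
proof -
  have "syndrome c L (\<lambda>x. poly H x / d x)
      = (\<Sum>i\<le>degree H. Polynomial.coeff H i * syndrome c L (\<lambda>x. x ^ i / d x))"
    unfolding syndrome_def
    by (simp add: poly_altdef sum_divide_distrib sum_distrib_left sum.swap[of _ "{..<length L}"] mult_ac)
  also have "\<dots> = 0"
    using assms by simp
  finally show ?thesis .
qed

lemma poly_G4: "poly (G4 t) x = x ^ t + x ^ (t - 1) + 1"
  by (simp add: G4_def poly_monom)

lemma G4_eq_power_X: "G4 t = [:0, 1:] ^ t + [:0, 1:] ^ (t - 1) + (1 :: 'a::field poly)"
  by (simp add: G4_def monom_altdef)

lemma G5_eq_X_mult_G4:
  assumes "t \<ge> 1"
  shows "G5 t = [:0, 1:] * (G4 t :: 'a::field poly)"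
proof -
  obtain m where "t = Suc m" using assms by (cases t) auto
  thus ?thesis
    by (simp add: G5_def G4_eq_power_X monom_altdef algebra_simps)
qed

lemma degree_G4:
  assumes "t \<ge> 1"
  shows "degree (G4 t :: 'a::field poly) = t"
proof (rule antisym)
  show "degree (G4 t :: 'a poly) \<le> t"
    unfolding G4_def by (intro degree_add_le) (auto intro: order.trans[OF degree_monom_le])
  have "Polynomial.coeff (G4 t :: 'a poly) t = 1"
    using assms by (simp add: G4_def coeff_monom)
  thus "t \<le> degree (G4 t :: 'a poly)"
    by (intro le_degree) simp
qed

lemma G4_nonzero:
  assumes "t \<ge> 1"
  shows "G4 t \<noteq> (0 :: 'a::field poly)"
  using degree_G4[OF assms, where 'a='a] assms by auto

(* By Frobenius, (X + 1)^(t+1) = (X + 1) (X^t + 1). *)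
lemma X_mult_G4_eq:
  assumes "prime CHAR('a::field)" and "t = CHAR('a) ^ m"
  shows "[:0, 1:] * G4 t = [:1, 1:] ^ (t + 1) - (1 :: 'a poly)"
proof -
  define X :: "'a poly" where "X = [:0, 1:]"
  have "(X + 1) ^ t = X ^ t + 1"
    using freshmans_dream'[where x=X and y=1] assms by simp
  moreover obtain n where "t = Suc n"
    using assms prime_gt_0_nat not0_implies_Suc by fastforce
  moreover have "[:1, 1:] = X + 1"
    by (simp add: X_def one_pCons)
  ultimately show ?thesis
    unfolding G4_eq_power_X X_def[symmetric] by (simp add: algebra_simps)
qed

lemma G4_dvd_X_power_minus_X:
  assumes "prime CHAR('a::field)" and "t = CHAR('a) ^ m"
  shows "G4 t dvd [:0, 1:] ^ (t * t) - ([:0, 1:] :: 'a poly)"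
proof -
  define X :: "'a poly" where "X = [:0, 1:]"
  define Y :: "'a poly" where "Y = [:1, 1:]"
  have Y_eq: "Y = X + 1"
    by (simp add: X_def Y_def one_pCons)
  have "t \<ge> 1"
    using assms prime_gt_0_nat[OF assms(1)] by (simp add: Suc_le_eq)
  hence "t * t = (t + 1) * (t - 1) + 1"
    by (cases t) auto
  hence Y_tt: "Y ^ (t * t) = Y * (Y ^ (t + 1)) ^ (t - 1)"
    by (metis power_add power_mult power_one_right mult.commute)
  have "Y ^ (t + 1) - 1 dvd (Y ^ (t + 1)) ^ (t - 1) - 1"
    by (metis power_diff_1_eq dvd_triv_left)
  also have "\<dots> dvd Y * ((Y ^ (t + 1)) ^ (t - 1) - 1)"
    by simp
  also have "Y * ((Y ^ (t + 1)) ^ (t - 1) - 1) = Y ^ (t * t) - Y"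
    by (simp add: Y_tt right_diff_distrib)
  also have "Y ^ (t * t) = X ^ (t * t) + 1"
    using freshmans_dream'[where x=X and y=1 and n="m + m"] assms
    by (simp add: Y_eq power_add)
  also have "X ^ (t * t) + 1 - Y = X ^ (t * t) - X"
    by (simp add: Y_eq)
  finally have "X * G4 t dvd X ^ (t * t) - X"
    using X_mult_G4_eq[OF assms] by (simp only: X_def Y_def)
  thus ?thesis
    unfolding X_def by (rule dvd_mult_right)
qed

lemma power_X_eq_mult_G4_plus_power:
  assumes "prime CHAR('a::field)" and "t = CHAR('a) ^ m"
    and "t = q * r" and "q \<ge> 2" and "e < t"
  shows "\<exists>P K :: 'a poly. degree P < t \<and> degree K < t * (q - 1) \<and>
           [:0, 1:] ^ e = K * G4 t + P ^ q"
proof -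
  define X :: "'a poly" where "X = [:0, 1:]"
  define g :: "'a poly" where "g = G4 t"
  have "t \<ge> 1"
    using assms prime_gt_0_nat[OF assms(1)] by (simp add: Suc_le_eq)
  hence g_nz: "g \<noteq> 0" and deg_g: "degree g = t"
    unfolding g_def by (simp_all add: G4_nonzero degree_G4)
  (* As X^(t^2) = X mod g, the q-th power of X^(e t r) is X^(e t^2) = X^e mod g. *)
  define P where "P = X ^ (e * t * r) mod g"
  have X_tt: "X ^ (t * t) mod g = X mod g"
    using G4_dvd_X_power_minus_X[OF assms(1,2)] by (simp add: X_def g_def mod_eq_dvd_iff)
  have "P ^ q mod g = (X ^ (t * t)) ^ e mod g"
    unfolding P_def by (simp add: power_mod assms(3) mult_ac flip: power_mult)
  also have "\<dots> = X ^ e mod g"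
    by (metis X_tt power_mod)
  finally have "g dvd X ^ e - P ^ q"
    by (metis mod_eq_dvd_iff)
  then obtain K where K: "X ^ e = K * g + P ^ q"
    by (metis diff_eq_eq dvdE mult.commute)
  have deg_P: "degree P < t"
    using degree_mod_less[OF g_nz] deg_g \<open>t \<ge> 1\<close> unfolding P_def
    by (metis less_one not_less not_one_le_zero degree_0 order.strict_trans1 mod_eq_0_iff_dvd)
  have "degree K < t * (q - 1)"
  proof (cases "K = 0")
    case False
    have "degree (X ^ e) < t * q"
      using assms(4,5) by (simp add: X_def degree_power_eq less_le_trans[of e t])
    moreover have "degree (P ^ q) < t * q"
      using assms(4) deg_P degree_power_le[of P q] by (meson le_less_trans mult_less_mono1 zero_less_numeral less_le_trans)
    ultimately
    have "degree (K * g) < t * q"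
      using K degree_diff_le_max[of "X ^ e" "P ^ q"] by (simp add: eq_diff_eq[symmetric])
    thus ?thesis
      using False g_nz deg_g assms(4) by (simp add: degree_mult_eq algebra_simps)
  qed (use \<open>t \<ge> 1\<close> assms(4) in simp)
  thus ?thesis
    using deg_P K unfolding X_def g_def by blast
qed

locale L4star_setting =
  fixes q t k l :: nat and L :: "'a::{finite,field} list"
  assumes k_pos: "k > 0" and l_pos: "l > 0"
    and q_eq: "q = CHAR('a) ^ k" and t_eq: "t = q ^ l"
    and card_eq: "CARD('a) = t ^ 2"
    and L_subset: "set L \<subseteq> L4star t"
begin

lemma prime_CHAR: "prime CHAR('a)"
  by (intro prime_CHAR_semidom finite_imp_CHAR_pos) simp

lemma q_ge_2: "q \<ge> 2"
proof -
  have "CHAR('a) ^ 1 \<le> CHAR('a) ^ k"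
    using k_pos prime_gt_1_nat[OF prime_CHAR] by (intro power_increasing) auto
  thus ?thesis
    using q_eq prime_ge_2_nat[OF prime_CHAR] by simp
qed

lemma t_eq_q_mult: "t = q * q ^ (l - 1)"
  using t_eq l_pos by (simp flip: power_Suc)

lemma q_le_t: "q \<le> t"
proof -
  have "q ^ (l - 1) \<ge> 1"
    using q_ge_2 by simp
  thus ?thesis
    using t_eq_q_mult by (metis mult_le_mono2 mult_1_right)
qed

lemma t_ge_2: "t \<ge> 2"
  using q_le_t q_ge_2 by simp

lemma t_CHAR_power: "t = CHAR('a) ^ (k * l)"
  by (simp add: t_eq q_eq power_mult)

lemma power_t_square: "(x :: 'a) ^ (t * t) = x"
  using power_card_eq_self[of x] card_eq by (simp add: power2_eq_square)

lemma nonzero_power_t_square_minus_one: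
  assumes "(x :: 'a) \<noteq> 0"
  shows "x ^ (t * t - 1) = 1"
  using nonzero_power_card_minus_one[OF assms] card_eq by (simp add: power2_eq_square)

lemma L_nonzero:
  assumes "x \<in> set L"
  shows "x \<noteq> 0" and "poly (G4 t) x \<noteq> 0"
  using assms L_subset by (auto simp: L4star_def)

lemma G4_frobenius:
  assumes "(x :: 'a) \<noteq> 0"
  shows "poly (G4 t) x ^ t * x ^ (t - 1) = poly (G4 t) x"
proof -
  have "poly (G4 t) x ^ t = x ^ (t * t) + x ^ ((t - 1) * t) + 1"
    using freshmans_dream'[OF prime_CHAR t_CHAR_power]
    by (simp add: poly_G4 power_mult)
  moreover have "x ^ ((t - 1) * t) * x ^ (t - 1) = 1"
  proof -
    have "(t - 1) * t + (t - 1) = t * t - 1"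
      using t_ge_2 by (cases t) auto
    thus ?thesis
      using nonzero_power_t_square_minus_one[OF assms] by (metis power_add)
  qed
  moreover have "x * x ^ (t - 1) = x ^ t"
    using t_ge_2 by (cases t) auto
  ultimately show ?thesis
    by (simp add: power_t_square poly_G4 algebra_simps)
qed

lemma frobenius_quotient:
  assumes "(x :: 'a) \<noteq> 0" and "poly (G4 t) x \<noteq> 0"
  shows "(x ^ a / poly (G4 t) x ^ b) ^ t = x ^ (a * t + (t - 1) * b) / poly (G4 t) x ^ b"
proof -
  let ?g = "poly (G4 t) x"
  have "(?g ^ b) ^ t = (?g ^ t) ^ b"
    by (simp flip: power_mult add: mult.commute)
  also have "?g ^ t = ?g / x ^ (t - 1)"
    using G4_frobenius[OF assms(1)] assms(1) by (simp add: eq_divide_eq)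
  finally have "(?g ^ b) ^ t = ?g ^ b / x ^ ((t - 1) * b)"
    by (simp add: power_divide power_mult)
  thus ?thesis
    using assms by (simp add: power_divide power_add flip: power_mult)
qed

lemma degree_G4_power: "degree (G4 t ^ (q - 1) :: 'a poly) = t * (q - 1)"
  using t_ge_2 by (simp add: degree_power_eq G4_nonzero degree_G4)

lemma degree_G5_power: "degree (G5 t ^ (q - 1) :: 'a poly) = (t + 1) * (q - 1)"
  using t_ge_2 by (simp add: degree_power_eq G4_nonzero degree_G4 G5_eq_X_mult_G4 degree_mult_eq)

lemma poly_G5: "poly (G5 t) x = x * poly (G4 t) x"
  using t_ge_2 by (simp add: G5_eq_X_mult_G4)

lemma reciprocal_X_G4_eq:
  assumes x0: "(x :: 'a) \<noteq> 0" and g0: "poly (G4 t) x \<noteq> 0"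
  shows "1 / (x * poly (G4 t) x) ^ (q - 1)
    = x ^ (t - q + 1) / poly (G4 t) x ^ q + x ^ (t - q) / poly (G4 t) x ^ q
      + (x ^ (t - q) / poly (G4 t) x ^ q) ^ t"
proof -
  let ?g = "poly (G4 t) x"
  let ?E = "(t - q) * t + (t - 1) * q"
  have "?E + (q - 1) = t * t - 1"
  proof -
    obtain d where t: "t = q + d" using q_le_t le_Suc_ex by blast
    obtain r where q: "q = Suc r" using q_ge_2 by (cases q) auto
    show ?thesis by (simp add: t q algebra_simps)
  qed
  hence "x ^ ?E * x ^ (q - 1) = 1"
    using nonzero_power_t_square_minus_one[OF x0] by (metis power_add)
  moreover have "x ^ (t - q + 1) * x ^ (q - 1) = x ^ t" and "x ^ (t - q) * x ^ (q - 1) = x ^ (t - 1)"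
    by (subst power_add[symmetric], use q_le_t q_ge_2 in simp)+
  ultimately have numerator: "(x ^ (t - q + 1) + x ^ (t - q) + x ^ ?E) * x ^ (q - 1) = ?g"
    by (simp add: poly_G4 distrib_right)
  have "?g ^ q = ?g * ?g ^ (q - 1)"
    using q_ge_2 by (cases q) auto
  hence "1 / (x * ?g) ^ (q - 1) = ?g / (x ^ (q - 1) * ?g ^ q)"
    using g0 by (simp add: power_mult_distrib)
  also have "\<dots> = (x ^ (t - q + 1) + x ^ (t - q) + x ^ ?E) / ?g ^ q"
    using x0 by (simp flip: numerator)
  also have "\<dots> = x ^ (t - q + 1) / ?g ^ q + x ^ (t - q) / ?g ^ q + (x ^ (t - q) / ?g ^ q) ^ t"
    by (simp add: frobenius_quotient[OF x0 g0] add_divide_distrib)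
  finally show ?thesis .
qed

lemma small_power_X_G4_eq:
  assumes x0: "(x :: 'a) \<noteq> 0" and g0: "poly (G4 t) x \<noteq> 0" and "0 < s"
  shows "x ^ s / (x * poly (G4 t) x) ^ (q - 1) = (x ^ (t * s - (q - 1)) / poly (G4 t) x ^ (q - 1)) ^ t"
proof -
  let ?g = "poly (G4 t) x"
  define e where "e = t * s - (q - 1)"
  have "t \<le> t * s"
    using \<open>0 < s\<close> by simp
  hence "e + (q - 1) = t * s"
    using q_le_t unfolding e_def by linarith
  hence "e * t + (q - 1) * t = t * t * s"
    by (metis add_mult_distrib mult.commute mult.left_commute)
  moreover have "(t - 1) * a + a = a * t" for a
    using t_ge_2 by (cases t) (auto simp: algebra_simps)
  ultimately have "e * t + (t - 1) * (q - 1) + (q - 1) = t * t * s"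
    by (metis add.assoc)
  hence "x ^ (e * t + (t - 1) * (q - 1)) * x ^ (q - 1) = (x ^ (t * t)) ^ s"
    by (simp only: power_add[symmetric] power_mult)
  hence "x ^ s / (x * ?g) ^ (q - 1)
      = (x ^ (e * t + (t - 1) * (q - 1)) * x ^ (q - 1)) / (?g ^ (q - 1) * x ^ (q - 1))"
    by (simp add: power_t_square power_mult_distrib mult.commute)
  also have "\<dots> = (x ^ e / ?g ^ (q - 1)) ^ t"
    using x0 by (simp add: frobenius_quotient[OF x0 g0])
  finally show ?thesis
    unfolding e_def .
qed

lemma syndrome_X_power_shift:
  "syndrome c L (\<lambda>x. x ^ (s + (q - 1)) / (x * poly (G4 t) x) ^ (q - 1))
     = syndrome c L (\<lambda>x. x ^ s / poly (G4 t) x ^ (q - 1))"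
  by (rule syndrome_cong) (use L_nonzero in \<open>simp add: power_add power_mult_distrib\<close>)

context
  fixes c :: "'a list"
  assumes c_length: "length c = length L" and c_subfield: "set c \<subseteq> subfield_GF q"
begin

lemma syndrome_power_q: "syndrome c L \<phi> ^ q = syndrome c L (\<lambda>x. \<phi> x ^ q)"
  using syndrome_power_CHAR_power[OF prime_CHAR q_eq c_length c_subfield] .

lemma syndrome_power_t: "syndrome c L \<phi> ^ t = syndrome c L (\<lambda>x. \<phi> x ^ t)"
  using c_subfield subfield_GF_subset_power[of q l] t_eq
  by (intro syndrome_power_CHAR_power[OF prime_CHAR t_CHAR_power c_length]) auto

lemma syndrome_G4_power_q_eq_0:
  assumes G4_checks: "\<And>s. s < t * (q - 1) \<Longrightarrow> syndrome c L (\<lambda>x. x ^ s / poly (G4 t) x ^ (q - 1)) = 0"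
    and "e < t"
  shows "syndrome c L (\<lambda>x. x ^ e / poly (G4 t) x ^ q) = 0"
proof -
  obtain P K :: "'a poly" where deg_P: "degree P < t" and deg_K: "degree K < t * (q - 1)"
    and PK: "[:0, 1:] ^ e = K * G4 t + P ^ q"
    using power_X_eq_mult_G4_plus_power[OF prime_CHAR t_CHAR_power t_eq_q_mult q_ge_2 \<open>e < t\<close>]
    by blast
  obtain r where q: "q = Suc (Suc r)"
    using q_ge_2 by (metis add_2_eq_Suc le_Suc_ex)
  define R where "R = P * G4 t ^ r"
  have "degree R \<le> degree P + r * t"
    unfolding R_def using degree_mult_le[of P "G4 t ^ r"] t_ge_2
    by (simp add: degree_power_eq G4_nonzero degree_G4)
  hence deg_R: "degree R < t * (q - 1)"
    using deg_P by (simp add: q algebra_simps)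
  have "syndrome c L (\<lambda>x. x ^ e / poly (G4 t) x ^ q)
      = syndrome c L (\<lambda>x. poly K x / poly (G4 t) x ^ (q - 1) + (poly R x / poly (G4 t) x ^ (q - 1)) ^ q)"
  proof (rule syndrome_cong)
    fix x assume "x \<in> set L"
    hence "poly (G4 t) x \<noteq> 0"
      by (rule L_nonzero)
    moreover have "x ^ e = poly K x * poly (G4 t) x + poly P x ^ q"
      using arg_cong[OF PK, of "\<lambda>p. poly p x"] by simp
    ultimately show "x ^ e / poly (G4 t) x ^ q
        = poly K x / poly (G4 t) x ^ (q - 1) + (poly R x / poly (G4 t) x ^ (q - 1)) ^ q"
      by (simp add: R_def q field_simps)
  qed
  also have "\<dots> = 0"
    using syndrome_poly_eq_0[OF G4_checks] deg_K deg_R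
    by (simp add: syndrome_add flip: syndrome_power_q)
  finally show ?thesis .
qed

lemma syndrome_reciprocal_X_G4_eq_0:
  assumes G4_checks: "\<And>s. s < t * (q - 1) \<Longrightarrow> syndrome c L (\<lambda>x. x ^ s / poly (G4 t) x ^ (q - 1)) = 0"
  shows "syndrome c L (\<lambda>x. 1 / (x * poly (G4 t) x) ^ (q - 1)) = 0"
proof -
  have "t - q + 1 < t" and "t - q < t"
    using q_le_t q_ge_2 by linarith+
  hence "syndrome c L (\<lambda>x. x ^ (t - q + 1) / poly (G4 t) x ^ q) = 0"
    and "syndrome c L (\<lambda>x. x ^ (t - q) / poly (G4 t) x ^ q) = 0"
    by (simp_all only: syndrome_G4_power_q_eq_0[OF G4_checks])
  hence "syndrome c L (\<lambda>x. x ^ (t - q + 1) / poly (G4 t) x ^ q + x ^ (t - q) / poly (G4 t) x ^ q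
                          + (x ^ (t - q) / poly (G4 t) x ^ q) ^ t) = 0"
    using t_ge_2 by (simp add: syndrome_add flip: syndrome_power_t)
  moreover have "syndrome c L (\<lambda>x. 1 / (x * poly (G4 t) x) ^ (q - 1))
      = syndrome c L (\<lambda>x. x ^ (t - q + 1) / poly (G4 t) x ^ q + x ^ (t - q) / poly (G4 t) x ^ q
                          + (x ^ (t - q) / poly (G4 t) x ^ q) ^ t)"
    by (intro syndrome_cong reciprocal_X_G4_eq L_nonzero)
  ultimately show ?thesis
    by simp
qed

lemma syndrome_small_power_eq_0:
  assumes G4_checks: "\<And>s. s < t * (q - 1) \<Longrightarrow> syndrome c L (\<lambda>x. x ^ s / poly (G4 t) x ^ (q - 1)) = 0"
    and "0 < s" and "s < q - 1"
  shows "syndrome c L (\<lambda>x. x ^ s / (x * poly (G4 t) x) ^ (q - 1)) = 0"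
proof -
  have "t * s < t * (q - 1)"
    using \<open>s < q - 1\<close> t_ge_2 by simp
  hence "t * s - (q - 1) < t * (q - 1)"
    by linarith
  hence "syndrome c L (\<lambda>x. (x ^ (t * s - (q - 1)) / poly (G4 t) x ^ (q - 1)) ^ t) = 0"
    using G4_checks t_ge_2 by (simp flip: syndrome_power_t)
  moreover have "syndrome c L (\<lambda>x. x ^ s / (x * poly (G4 t) x) ^ (q - 1))
      = syndrome c L (\<lambda>x. (x ^ (t * s - (q - 1)) / poly (G4 t) x ^ (q - 1)) ^ t)"
    by (intro syndrome_cong small_power_X_G4_eq L_nonzero \<open>0 < s\<close>)
  ultimately show ?thesis
    by simp
qed

lemma goppa_checks_G5_iff_G4: "goppa_checks c L (G5 t ^ (q - 1)) \<longleftrightarrow> goppa_checks c L (G4 t ^ (q - 1))"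
  unfolding goppa_checks_def degree_G5_power degree_G4_power poly_power poly_G5
proof (intro iffI allI impI)
  fix s
  assume G5_checks: "\<forall>s<(t + 1) * (q - 1). syndrome c L (\<lambda>x. x ^ s / (x * poly (G4 t) x) ^ (q - 1)) = 0"
    and "s < t * (q - 1)"
  hence "s + (q - 1) < (t + 1) * (q - 1)"
    by (metis add_less_mono1 add_mult_distrib mult_1)
  with G5_checks have "syndrome c L (\<lambda>x. x ^ (s + (q - 1)) / (x * poly (G4 t) x) ^ (q - 1)) = 0"
    by blast
  thus "syndrome c L (\<lambda>x. x ^ s / poly (G4 t) x ^ (q - 1)) = 0"
    by (simp only: syndrome_X_power_shift)
next
  fix s
  assume G4_checks: "\<forall>s<t * (q - 1). syndrome c L (\<lambda>x. x ^ s / poly (G4 t) x ^ (q - 1)) = 0"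
    and "s < (t + 1) * (q - 1)"
  consider "s = 0" | "0 < s" "s < q - 1" | s' where "s = s' + (q - 1)"
    by (metis le_add_diff_inverse2 not_gr0 not_le)
  thus "syndrome c L (\<lambda>x. x ^ s / (x * poly (G4 t) x) ^ (q - 1)) = 0"
  proof cases
    case 1
    thus ?thesis
      using syndrome_reciprocal_X_G4_eq_0 G4_checks by simp
  next
    case 2
    thus ?thesis
      using syndrome_small_power_eq_0 G4_checks by simp
  next
    case 3
    with \<open>s < (t + 1) * (q - 1)\<close> have "s' < t * (q - 1)"
      by (metis add_less_cancel_right add_mult_distrib mult_1)
    thus ?thesis
      using G4_checks unfolding 3 syndrome_X_power_shift by blast
  qed
qed

end

end

theorem lemma7:
  fixes q l t :: nat and L :: "'a::{finite,field} list"
  assumes "\<exists>p k. prime p \<and> k > 0 \<and> q = p ^ k"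
    and "l \<ge> 1"
    and "t = q ^ l"
    and "CARD('a) = t ^ 2"
    and "distinct L" and "set L = L4star t"
  shows "goppa_code q L ((G5 t) ^ (q - 1)) = goppa_code q L ((G4 t) ^ (q - 1))"
proof -
  obtain p k where p: "prime p" and "k > 0" and q: "q = p ^ k"
    using assms(1) by blast
  have "CHAR('a) = p"
    using CHAR_eq_prime_of_CARD_eq_power[OF p, of "k * l * 2"] assms(3,4) q
    by (simp add: power_mult)
  then interpret L4star_setting q t k l L
    using \<open>k > 0\<close> assms(2-4,6) q by unfold_locales auto
  show ?thesis
    using goppa_checks_G5_iff_G4 by (auto simp: goppa_code_iff_checks)
qed

end
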